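(* Let $n$ be an odd positive integer having a unique prime divisor $p'$ with $v_{p'}(n)=2$, such that $v_q(n)=1$ for every prime divisor $q\neq p'$ of $n$, and suppose every prime divisor of $n$ is at least $7$. Let $A=S(n)$. If $\omega(n)\neq 2$, then $D_A(n)=\Omega(n)+1$.
   Context: $\mathbb{Z}_n$ is the integers mod $n$, $U(n)$ its unit group. For nonempty $A\subseteq\mathbb{Z}_n\setminus\{0\}$, a sequence $(x_1,\ldots,x_k)$ is an $A$-weighted zero-sum sequence if $\sum a_ix_i=0$ for some $a_i\in A$; $D_A(n)$ is the least $k$ such that every length-$k$ sequence in $\mathbb{Z}_n$ has a nonempty $A$-weighted zero-sum subsequence. $v_p(n)=r$ means $p^r\mid n$, $p^{r+1}\nmid n$; $\Omega(n)$ is the number of prime factors with multiplicity and $\omega(n)$ the number of distinct prime factors. For odd $n=\prod p_i^{r_i}$ and $a\in U(n)$, $\left(\frac{a}{n}\right)=\prod\left(\frac{a}{p_i}\right)^{r_i}$ (Legendre symbols of images mod $p_i$), and $S(n)$ is the kernel of $a\mapsto\left(\frac{a}{n}\right)$ on $U(n)$. *)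

theory Defs
  imports "HOL-Number_Theory.Number_Theory"
begin

text \<open>Elements of Z_n are represented by naturals in {0..<n}; a sequence of length k
  is a list of such naturals.\<close>

definition has_A_zero_sum_subseq :: "nat \<Rightarrow> nat set \<Rightarrow> nat list \<Rightarrow> bool" where
  "has_A_zero_sum_subseq n A xs \<longleftrightarrow>
     (\<exists>I. I \<subseteq> {..<length xs} \<and> I \<noteq> {} \<and>
        (\<exists>a. (\<forall>i\<in>I. a i \<in> A) \<and> [(\<Sum>i\<in>I. a i * xs ! i) = 0] (mod n)))"

definition D_A :: "nat set \<Rightarrow> nat \<Rightarrow> nat" where
  "D_A A n = (LEAST k. \<forall>xs. length xs = k \<and> set xs \<subseteq> {..<n} \<longrightarrow>
                              has_A_zero_sum_subseq n A xs)"

definition jacobi_sym :: "nat \<Rightarrow> nat \<Rightarrow> int" where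
  "jacobi_sym a n = (\<Prod>p\<in>prime_factors n. Legendre (int a) (int p) ^ multiplicity p n)"

definition S_set :: "nat \<Rightarrow> nat set" where
  "S_set n = {a \<in> {0..<n}. coprime a n \<and> jacobi_sym a n = 1}"

definition big_omega :: "nat \<Rightarrow> nat" where
  "big_omega n = (\<Sum>p\<in>prime_factors n. multiplicity p n)"

definition small_omega :: "nat \<Rightarrow> nat" where
  "small_omega n = card (prime_factors n)"

end

theory Submission
  imports Defs
begin

text \<open>Write \<open>n = p\<^sup>2 q\<^sub>1 \<cdots> q\<^sub>s\<close>. The partial products of the prime factorisation of \<open>n\<close>
  form a sequence of length \<open>\<Omega>(n)\<close> without a zero-sum weighted by units, which gives the lower bound.

  For the upper bound, weights in \<open>S(n)\<close> are glued by the Chinese remainder theorem from local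
  weights: units modulo \<open>p\<^sup>2\<close>, whose Legendre symbol enters squared, and units modulo each \<open>q\<^sub>k\<close>
  with prescribed quadratic characters whose product over \<open>k\<close> is \<open>1\<close> for every term. Among \<open>s + 3\<close>
  terms, a parity argument yields a nonempty subset containing an even number of terms prime to \<open>p\<close>,
  to \<open>p\<^sup>2\<close> and to each \<open>q\<^sub>k\<close>. Modulo \<open>p\<^sup>2\<close> such terms cancel in pairs. Modulo a prime
  \<open>q \<ge> 7\<close> all four sign patterns of \<open>((u/q), ((1 - u)/q))\<close> occur, so sums of at least two terms
  reach any unit with prescribed characters, and a sum of exactly two terms reaches \<open>0\<close> when the
  characters are compatible. The only obstruction, two terms that alone are prime to every \<open>q\<^sub>k\<close>
  with incompatible characters, is removed with the help of three further terms, which needs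
  \<open>s \<noteq> 1\<close>.\<close>

section \<open>Legendre symbols\<close>

lemma Legendre_cong:
  assumes "[a = b] (mod m)"
  shows "Legendre a m = Legendre b m"
proof -
  have "[a = 0] (mod m) \<longleftrightarrow> [b = 0] (mod m)" "QuadRes m a \<longleftrightarrow> QuadRes m b"
    unfolding QuadRes_def using assms cong_sym cong_trans by metis+
  then show ?thesis
    unfolding Legendre_def by simp
qed

lemma Legendre_eq_0_iff: "Legendre a m = 0 \<longleftrightarrow> m dvd a"
  by (simp add: Legendre_def cong_0_iff)

lemma Legendre_cases: "\<not> m dvd a \<Longrightarrow> Legendre a m = 1 \<or> Legendre a m = -1"
  by (simp add: Legendre_def cong_0_iff)

lemma Legendre_square:
  assumes "prime (q::nat)" "\<not> int q dvd a"
  shows "Legendre (a^2) q = 1"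
proof -
  have "\<not> int q dvd a^2"
    using assms by (metis prime_dvd_power prime_nat_int_transfer)
  moreover have "QuadRes q (a^2)"
    unfolding QuadRes_def by (meson cong_refl)
  ultimately show ?thesis
    by (simp add: Legendre_def cong_0_iff)
qed

lemma Legendre_mult:
  assumes "prime (q::nat)" "2 < q"
  shows "Legendre (a * b) q = Legendre a q * Legendre b q"
proof -
  let ?h = "(q - 1) div 2"
  have range: "Legendre c q \<in> {-1, 0, 1}" for c
    by (simp add: Legendre_def)
  have "[Legendre (a * b) q = (a * b) ^ ?h] (mod q)"
    using euler_criterion[OF assms] .
  also have "(a * b) ^ ?h = a ^ ?h * b ^ ?h"
    by (rule power_mult_distrib)
  also have "[\<dots> = Legendre a q * Legendre b q] (mod q)"
    using euler_criterion[OF assms, of a] euler_criterion[OF assms, of b]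
    by (simp add: cong_mult cong_sym)
  finally have "int q dvd Legendre (a * b) q - Legendre a q * Legendre b q"
    by (simp add: cong_iff_dvd_diff)
  moreover have "\<bar>Legendre (a * b) q - Legendre a q * Legendre b q\<bar> < int q"
    using assms(2) range[of a] range[of b] range[of "a * b"] by auto
  ultimately show ?thesis
    using dvd_imp_le_int[of "Legendre (a * b) q - Legendre a q * Legendre b q" "int q"] by linarith
qed

text \<open>A primitive root \<open>g\<close> has order \<open>q - 1\<close>, so Euler's criterion rules out \<open>(g/q) = 1\<close>.\<close>

lemma Legendre_nonresidue_exists:
  assumes "prime (q::nat)" "2 < q"
  shows "\<exists>g. Legendre g q = -1"
proof -
  obtain g where g: "residue_primroot q g"
    using prime_primitive_root_exists[of q] assms prime_gt_1_nat by blast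
  then have ord: "ord q g = q - 1" and "coprime q g"
    using assms(1) by (auto simp: residue_primroot_def totient_prime)
  then have "\<not> q dvd g"
    using assms(1) by (metis coprime_common_divisor dvd_refl not_prime_unit)
  then have "\<not> int q dvd int g"
    by simp
  moreover have "Legendre (int g) q \<noteq> 1"
  proof
    assume "Legendre (int g) q = 1"
    then have "[int g ^ ((q - 1) div 2) = 1] (mod int q)"
      using euler_criterion[OF assms, of "int g"] by (simp add: cong_sym)
    then have "[g ^ ((q - 1) div 2) = 1] (mod q)"
      by (metis cong_int_iff of_nat_1 of_nat_power)
    then have "q - 1 dvd (q - 1) div 2"
      using ord ord_divides' by simp
    then show False
      using assms(2) by (auto dest: dvd_imp_le)
  qed
  ultimately show ?thesis
    using Legendre_cases by blast
qed

lemma inverse_mod_prime_exists: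
  assumes "prime (q::nat)" "\<not> int q dvd a"
  shows "\<exists>a'. [a * a' = 1] (mod int q)"
proof -
  have "coprime a (int q)"
    using assms by (metis coprime_commute prime_imp_coprime prime_nat_int_transfer)
  then show ?thesis
    using cong_solve_coprime_int by blast
qed

definition nonzero_mod :: "nat \<Rightarrow> ('a \<Rightarrow> int) \<Rightarrow> 'a set \<Rightarrow> 'a set" where
  "nonzero_mod m x I = {i\<in>I. \<not> int m dvd x i}"

section \<open>Prescribed quadratic characters modulo a prime \<open>q \<ge> 7\<close>\<close>

locale prime_ge_7 =
  fixes q :: nat
  assumes prime_q: "prime q" and q_ge_7: "7 \<le> q"
begin

abbreviation chi :: "int \<Rightarrow> int" where
  "chi a \<equiv> Legendre a (int q)"

lemma chi_mult: "chi (a * b) = chi a * chi b"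
  using Legendre_mult[OF prime_q] q_ge_7 by simp

lemma chi_sign: "\<not> int q dvd a \<Longrightarrow> chi a = 1 \<or> chi a = -1"
  by (rule Legendre_cases)

lemma chi_square_eq_1: "\<not> int q dvd a \<Longrightarrow> chi a * chi a = 1"
  using chi_sign by fastforce

lemma chi_nonzero: "chi a = 1 \<or> chi a = -1 \<Longrightarrow> \<not> int q dvd a"
  using Legendre_eq_0_iff[of a "int q"] by auto

lemma small_not_dvd: "0 < z \<Longrightarrow> z < int q \<Longrightarrow> \<not> int q dvd z"
  using zdvd_imp_le by fastforce

lemma chi_small_square: "0 < z \<Longrightarrow> z < int q \<Longrightarrow> chi (z^2) = 1"
  using Legendre_square[OF prime_q] small_not_dvd by blast

lemma chi_one: "chi 1 = 1"
  using chi_small_square[of 1] q_ge_7 by simp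

lemma chi_exists: "e = 1 \<or> e = -1 \<Longrightarrow> \<exists>r. chi r = e"
  using chi_one Legendre_nonresidue_exists[OF prime_q] q_ge_7 by auto

lemma inverse_exists:
  assumes "\<not> int q dvd a"
  shows "\<exists>a'. [a * a' = 1] (mod int q) \<and> chi a' = chi a"
proof -
  obtain a' where a': "[a * a' = 1] (mod int q)"
    using inverse_mod_prime_exists[OF prime_q assms] by blast
  have "chi a * chi a' = 1"
    using Legendre_cong[OF a'] chi_mult chi_one by simp
  then have "chi a' = chi a"
    using Legendre_cases[OF assms] by auto
  with a' show ?thesis
    by blast
qed

lemma not_dvd_mult: "\<not> int q dvd a \<Longrightarrow> \<not> int q dvd b \<Longrightarrow> \<not> int q dvd (a * b)"
  by (metis prime_dvd_mult_iff prime_nat_int_transfer prime_q)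

text \<open>\<open>realizable \<alpha> \<beta>\<close>: some \<open>u = x/(x + y)\<close> has \<open>(u/q) = \<alpha>\<close> and \<open>((1 - u)/q) = \<beta>\<close>.\<close>

definition realizable :: "int \<Rightarrow> int \<Rightarrow> bool" where
  "realizable \<alpha> \<beta> \<longleftrightarrow> (\<exists>x y. chi x * chi (x + y) = \<alpha> \<and> chi y * chi (x + y) = \<beta>)"

lemma realizable_swap:
  assumes "realizable \<alpha> \<beta>"
  shows "realizable \<beta> \<alpha>"
proof -
  obtain x y where "chi x * chi (x + y) = \<alpha>" "chi y * chi (x + y) = \<beta>"
    using assms unfolding realizable_def by blast
  then have "chi y * chi (y + x) = \<beta> \<and> chi x * chi (y + x) = \<alpha>"
    by (simp add: add.commute)
  then show ?thesis
    unfolding realizable_def by blast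
qed

text \<open>The witness \<open>(x + y, -y)\<close> realises the substitution \<open>u \<mapsto> 1/u\<close>.\<close>

lemma realizable_rotate:
  assumes "\<alpha> = 1 \<or> \<alpha> = -1" and "realizable \<alpha> \<beta>"
  shows "realizable \<alpha> (chi (-1) * \<alpha> * \<beta>)"
proof -
  obtain x y where \<alpha>: "chi x * chi (x + y) = \<alpha>" and \<beta>: "chi y * chi (x + y) = \<beta>"
    using assms(2) unfolding realizable_def by blast
  have "chi (x + y) * chi (x + y) = 1"
    using assms(1) \<alpha> chi_square_eq_1 Legendre_eq_0_iff[of "x + y" "int q"] by auto
  then have "chi (- y) * chi x = chi (-1) * (chi x * chi (x + y)) * (chi y * chi (x + y))"
    using chi_mult[of "-1" y] by (simp add: algebra_simps)
  then have "chi (x + y) * chi (x + y + - y) = \<alpha> \<and> chi (- y) * chi (x + y + - y) = chi (-1) * \<alpha> * \<beta>"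
    using \<alpha> \<beta> by (simp add: mult.commute)
  then show ?thesis
    unfolding realizable_def by blast
qed

lemma realizable_1_1: "realizable 1 1"
proof -
  have "chi 9 = 1" "chi 16 = 1" "chi 25 = 1"
    using chi_small_square[of 3] chi_small_square[of 4] chi_small_square[of 5] q_ge_7 by simp_all
  then have "chi 9 * chi (9 + 16) = 1 \<and> chi 16 * chi (9 + 16) = 1"
    by simp
  then show ?thesis
    unfolding realizable_def by blast
qed

text \<open>With \<open>m\<close> the least positive non-residue, \<open>(m - 1) + 1 = m\<close> relates a residue and \<open>1\<close> to \<open>m\<close>.\<close>

lemma realizable_neg_neg: "realizable (-1) (-1)"
proof -
  obtain g where g: "chi g = -1"
    using chi_exists by blast
  define k where "k = nat (g mod int q)"
  have "int k = g mod int q"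
    using q_ge_7 unfolding k_def by simp
  then have k: "chi (int k) = -1"
    using Legendre_cong[of "int k" g] g by (simp add: cong_def)
  have "k < q"
    using q_ge_7 unfolding k_def by (simp add: nat_less_iff)
  define m where "m = (LEAST k. chi (int k) = -1)"
  have m: "chi (int m) = -1"
    unfolding m_def by (rule LeastI[of _ k]) (rule k)
  have "m \<le> k"
    unfolding m_def by (rule Least_le) (rule k)
  have "m \<noteq> 0"
  proof
    assume "m = 0"
    with m show False
      using Legendre_eq_0_iff[of 0 "int q"] by simp
  qed
  moreover have "m \<noteq> 1"
    using m chi_one by auto
  ultimately have "chi (int (m - 1)) \<noteq> -1"
    using not_less_Least[of "m - 1" "\<lambda>k. chi (int k) = -1"] unfolding m_def by simp
  moreover have "\<not> int q dvd int (m - 1)"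
    using \<open>m \<noteq> 0\<close> \<open>m \<noteq> 1\<close> \<open>m \<le> k\<close> \<open>k < q\<close> by (intro small_not_dvd) auto
  moreover have "int (m - 1) = int m - 1"
    using \<open>m \<noteq> 0\<close> by simp
  ultimately have "chi (int m - 1) = 1"
    using Legendre_cases[of "int q" "int (m - 1)"] by simp
  then have "chi (int m - 1) * chi (int m - 1 + 1) = -1 \<and> chi 1 * chi (int m - 1 + 1) = -1"
    using m chi_one by simp
  then show ?thesis
    unfolding realizable_def by blast
qed

lemma realizable_all:
  assumes "\<alpha> = 1 \<or> \<alpha> = -1" "\<beta> = 1 \<or> \<beta> = -1"
  shows "realizable \<alpha> \<beta>"
proof -
  have "\<not> int q dvd -1"
    using small_not_dvd[of 1] q_ge_7 by simp
  then consider "chi (-1) = -1" | "chi (-1) = 1"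
    using Legendre_cases by blast
  then have "realizable 1 (-1) \<and> realizable (-1) 1"
  proof cases
    case 1
    then have "realizable 1 (-1)"
      using realizable_rotate[OF _ realizable_1_1] by simp
    then show ?thesis
      using realizable_swap by blast
  next
    case 2
    then have "realizable (-1) 1"
      using realizable_rotate[OF _ realizable_neg_neg] by simp
    then show ?thesis
      using realizable_swap by blast
  qed
  then show ?thesis
    using assms realizable_1_1 realizable_neg_neg by blast
qed

lemma two_term_sum_exists:
  assumes y1: "\<not> int q dvd y1" and y2: "\<not> int q dvd y2" and t: "\<not> int q dvd t"
    and e1: "e1 = 1 \<or> e1 = -1" and e2: "e2 = 1 \<or> e2 = -1"
  shows "\<exists>c1 c2. chi c1 = e1 \<and> chi c2 = e2 \<and> [c1 * y1 + c2 * y2 = t] (mod int q)"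
proof -
  have "e1 * chi y1 * chi t = 1 \<or> e1 * chi y1 * chi t = -1"
    using e1 chi_sign[OF y1] chi_sign[OF t] by auto
  moreover have "e2 * chi y2 * chi t = 1 \<or> e2 * chi y2 * chi t = -1"
    using e2 chi_sign[OF y2] chi_sign[OF t] by auto
  ultimately obtain x y where x: "chi x * chi (x + y) = e1 * chi y1 * chi t"
    and y: "chi y * chi (x + y) = e2 * chi y2 * chi t"
    using realizable_all unfolding realizable_def by meson
  define s where "s = x + y"
  have "chi s \<noteq> 0"
    using x e1 chi_sign[OF y1] chi_sign[OF t] unfolding s_def by auto
  then have s: "\<not> int q dvd s"
    using Legendre_eq_0_iff[of s "int q"] by simp
  obtain w where w: "[y1 * y2 * s * w = 1] (mod int q)" "chi w = chi (y1 * y2 * s)"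
    using inverse_exists[OF not_dvd_mult[OF not_dvd_mult[OF y1 y2] s]] by blast
  \<comment> \<open>\<open>c\<^sub>1 = t x/(s y\<^sub>1)\<close> and \<open>c\<^sub>2 = t y/(s y\<^sub>2)\<close>, with one inverse \<open>w\<close> of \<open>y\<^sub>1 y\<^sub>2 s\<close>\<close>
  define c1 where "c1 = x * (t * w) * y2"
  define c2 where "c2 = y * (t * w) * y1"
  have sq: "chi y1 * chi y1 = 1" "chi y2 * chi y2 = 1" "chi t * chi t = 1"
    using chi_square_eq_1 y1 y2 t by blast+
  have "chi c1 = (chi x * chi s) * chi t * chi y1 * (chi y2 * chi y2)"
    unfolding c1_def using w(2) by (simp add: chi_mult mult_ac)
  also have "\<dots> = e1 * (chi y1 * chi y1) * (chi t * chi t)"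
    using x sq unfolding s_def by (simp add: mult_ac)
  finally have c1: "chi c1 = e1"
    using sq by simp
  have "chi c2 = (chi y * chi s) * chi t * chi y2 * (chi y1 * chi y1)"
    unfolding c2_def using w(2) by (simp add: chi_mult mult_ac)
  also have "\<dots> = e2 * (chi y2 * chi y2) * (chi t * chi t)"
    using y sq unfolding s_def by (simp add: mult_ac)
  finally have c2: "chi c2 = e2"
    using sq by simp
  have "c1 * y1 + c2 * y2 = t * (y1 * y2 * s * w)"
    unfolding c1_def c2_def s_def by (simp add: algebra_simps)
  also have "[\<dots> = t * 1] (mod int q)"
    using w(1) by (rule cong_scalar_left)
  finally show ?thesis
    using c1 c2 by auto
qed

lemma char_avoiding_exists:
  assumes e: "e = 1 \<or> e = -1" and y: "\<not> int q dvd y"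
  shows "\<exists>c. chi c = e \<and> \<not> int q dvd (t - c * y)"
proof -
  obtain r where r: "chi r = e"
    using chi_exists e by blast
  show ?thesis
  proof (cases "int q dvd (t - r * y)")
    case False
    with r show ?thesis
      by blast
  next
    case True
    have "chi (4 * r) = e"
      using chi_small_square[of 2] q_ge_7 r by (simp add: chi_mult)
    moreover have "\<not> int q dvd (t - 4 * r * y)"
    proof
      assume "int q dvd (t - 4 * r * y)"
      with True have "int q dvd (t - r * y) - (t - 4 * r * y)"
        by (rule dvd_diff)
      then have "int q dvd 3 * (r * y)"
        by (simp add: algebra_simps)
      moreover have "\<not> int q dvd 3" "\<not> int q dvd r"
        using small_not_dvd[of 3] q_ge_7 chi_nonzero[of r] r e by auto
      then have "\<not> int q dvd 3 * (r * y)"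
        using not_dvd_mult y by blast
      ultimately show False
        by contradiction
    qed
    ultimately show ?thesis
      by blast
  qed
qed

lemma sum_with_characters_exists:
  assumes "finite N" "2 \<le> card N" "\<forall>i\<in>N. \<not> int q dvd y i" "\<forall>i\<in>N. e i = 1 \<or> e i = -1"
    and "\<not> int q dvd t"
  shows "\<exists>c. (\<forall>i\<in>N. chi (c i) = e i) \<and> [(\<Sum>i\<in>N. c i * y i) = t] (mod int q)"
  using assms
proof (induction N arbitrary: t rule: finite_induct)
  case empty
  then show ?case
    by simp
next
  case (insert i N)
  have yi: "\<not> int q dvd y i" and ei: "e i = 1 \<or> e i = -1"
    using insert.prems by auto
  have "card N = 1 \<or> 2 \<le> card N"
    using insert by auto
  then show ?case
  proof
    assume "card N = 1"
    then obtain j where N: "N = {j}"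
      by (rule card_1_singletonE)
    with insert.hyps(2) have "i \<noteq> j"
      by simp
    obtain c1 c2 where c: "chi c1 = e i" "chi c2 = e j" "[c1 * y i + c2 * y j = t] (mod int q)"
      using two_term_sum_exists[of "y i" "y j" t "e i" "e j"] insert.prems N by auto
    show ?case
      using c \<open>i \<noteq> j\<close> N by (intro exI[of _ "\<lambda>k. if k = i then c1 else c2"]) auto
  next
    assume "2 \<le> card N"
    obtain ci where ci: "chi ci = e i" "\<not> int q dvd (t - ci * y i)"
      using char_avoiding_exists[OF ei yi] by blast
    obtain c where c: "\<forall>k\<in>N. chi (c k) = e k" "[(\<Sum>k\<in>N. c k * y k) = t - ci * y i] (mod int q)"
      using insert.IH[OF \<open>2 \<le> card N\<close> _ _ ci(2)] insert.prems by blast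
    have "(\<Sum>k\<in>N. (c(i := ci)) k * y k) = (\<Sum>k\<in>N. c k * y k)"
      using insert.hyps(2) by (intro sum.cong) auto
    then have "(\<Sum>k\<in>insert i N. (c(i := ci)) k * y k) = ci * y i + (\<Sum>k\<in>N. c k * y k)"
      using insert.hyps by simp
    also have "[\<dots> = ci * y i + (t - ci * y i)] (mod int q)"
      using c(2) by (rule cong_add[OF cong_refl])
    finally show ?case
      using c(1) ci(1) insert.hyps(2) by (intro exI[of _ "c(i := ci)"]) auto
  qed
qed

text \<open>\<open>(r y\<^sub>2, -r y\<^sub>1)\<close> cancels exactly; the hypothesis on \<open>e\<^sub>1 e\<^sub>2\<close> fixes the second character.\<close>

lemma two_term_zero_sum:
  assumes y1: "\<not> int q dvd y1" and y2: "\<not> int q dvd y2"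
    and e1: "e1 = 1 \<or> e1 = -1" and e12: "e1 * e2 = chi (- (y1 * y2))"
  shows "\<exists>c1 c2. chi c1 = e1 \<and> chi c2 = e2 \<and> c1 * y1 + c2 * y2 = 0"
proof -
  have sq: "chi y2 * chi y2 = 1" "e1 * e1 = 1"
    using chi_square_eq_1[OF y2] e1 by auto
  have "e1 * chi y2 = 1 \<or> e1 * chi y2 = -1"
    using e1 chi_sign[OF y2] by auto
  then obtain r where r: "chi r = e1 * chi y2"
    using chi_exists by blast
  have "chi (r * y2) = e1"
    using r sq by (simp add: chi_mult algebra_simps)
  moreover have "chi (- (r * y1)) = e2"
  proof -
    have "chi (- (r * y1) * y2 * y2) = chi (r * - (y1 * y2) * y2)"
      by (simp add: algebra_simps)
    then have "chi (- (r * y1)) * (chi y2 * chi y2) = (e1 * e1) * e2 * (chi y2 * chi y2)"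
      using r e12 by (simp only: chi_mult) (simp add: algebra_simps)
    then show ?thesis
      using sq by simp
  qed
  moreover have "r * y2 * y1 + - (r * y1) * y2 = 0"
    by simp
  ultimately show ?thesis
    by blast
qed

lemma zero_sum_on_support:
  assumes fin: "finite N" and card: "card N \<noteq> 1"
    and y: "\<forall>i\<in>N. \<not> int q dvd y i" and e: "\<forall>i\<in>N. e i = 1 \<or> e i = -1"
    and pair: "\<forall>i j. i \<noteq> j \<longrightarrow> N = {i, j} \<longrightarrow> e i * e j = chi (- (y i * y j))"
  shows "\<exists>c. (\<forall>i\<in>N. chi (c i) = e i) \<and> int q dvd (\<Sum>i\<in>N. c i * y i)"
proof -
  have "N = {} \<or> card N = 2 \<or> 3 \<le> card N"
    using card card_0_eq[OF fin] by linarith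
  then consider "N = {}" | "card N = 2" | "3 \<le> card N"
    by blast
  then show ?thesis
  proof cases
    case 1
    then show ?thesis
      by simp
  next
    case 2
    then obtain i j where N: "N = {i, j}" and "i \<noteq> j"
      by (meson card_2_iff)
    then obtain c1 c2 where c: "chi c1 = e i" "chi c2 = e j" "c1 * y i + c2 * y j = 0"
      using two_term_zero_sum[of "y i" "y j" "e i" "e j"] y e pair by auto
    then show ?thesis
      using N \<open>i \<noteq> j\<close> by (intro exI[of _ "\<lambda>k. if k = i then c1 else c2"]) auto
  next
    case 3
    then obtain i where i: "i \<in> N"
      by fastforce
    obtain r where r: "chi r = e i"
      using chi_exists e i by blast
    have "\<not> int q dvd - (r * y i)"
      using not_dvd_mult chi_nonzero[of r] r e y i by auto
    moreover have "2 \<le> card (N - {i})"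
      using 3 i fin by simp
    ultimately obtain c where c: "\<forall>k\<in>N - {i}. chi (c k) = e k"
      "[(\<Sum>k\<in>N - {i}. c k * y k) = - (r * y i)] (mod int q)"
      using sum_with_characters_exists[of "N - {i}" y e "- (r * y i)"] fin y e by blast
    have "(\<Sum>k\<in>N - {i}. (c(i := r)) k * y k) = (\<Sum>k\<in>N - {i}. c k * y k)"
      by (intro sum.cong) auto
    then have "(\<Sum>k\<in>N. (c(i := r)) k * y k) = r * y i + (\<Sum>k\<in>N - {i}. c k * y k)"
      using fin i by (simp add: sum.remove)
    also have "[\<dots> = r * y i + - (r * y i)] (mod int q)"
      using c(2) by (rule cong_add[OF cong_refl])
    finally show ?thesis
      using c(1) r by (intro exI[of _ "c(i := r)"]) (auto simp: cong_0_iff)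
  qed
qed

lemma zero_sum_with_characters:
  assumes fin: "finite I" and e: "\<forall>i\<in>I. e i = 1 \<or> e i = -1"
    and card: "card (nonzero_mod q y I) \<noteq> 1"
    and pair: "\<forall>i j. i \<noteq> j \<longrightarrow> nonzero_mod q y I = {i, j} \<longrightarrow> e i * e j = chi (- (y i * y j))"
  shows "\<exists>c. (\<forall>i\<in>I. chi (c i) = e i) \<and> int q dvd (\<Sum>i\<in>I. c i * y i)"
proof -
  define N where "N = nonzero_mod q y I"
  have N: "N \<subseteq> I" "finite N"
    using fin unfolding N_def nonzero_mod_def by auto
  obtain c where c: "\<forall>i\<in>N. chi (c i) = e i" "int q dvd (\<Sum>i\<in>N. c i * y i)"
    using zero_sum_on_support[of N y e] N card pair e unfolding N_def nonzero_mod_def by blast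
  have "\<forall>i\<in>I. \<exists>r. chi r = e i"
    using chi_exists e by blast
  then obtain c0 where c0: "\<forall>i\<in>I. chi (c0 i) = e i"
    by (metis bchoice)
  define c' where "c' i = (if i \<in> N then c i else c0 i)" for i
  have "(\<Sum>i\<in>I. c' i * y i) = (\<Sum>i\<in>I - N. c' i * y i) + (\<Sum>i\<in>N. c' i * y i)"
    by (rule sum.subset_diff[OF N(1) fin])
  also have "(\<Sum>i\<in>I - N. c' i * y i) = (\<Sum>i\<in>I - N. c0 i * y i)"
    by (rule sum.cong) (auto simp: c'_def)
  also have "(\<Sum>i\<in>N. c' i * y i) = (\<Sum>i\<in>N. c i * y i)"
    by (rule sum.cong) (auto simp: c'_def)
  finally have "(\<Sum>i\<in>I. c' i * y i) = (\<Sum>i\<in>I - N. c0 i * y i) + (\<Sum>i\<in>N. c i * y i)" .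
  moreover have "int q dvd (\<Sum>i\<in>I - N. c0 i * y i)"
    by (rule dvd_sum) (auto simp: N_def nonzero_mod_def)
  ultimately have "int q dvd (\<Sum>i\<in>I. c' i * y i)"
    using c(2) by simp
  moreover have "\<forall>i\<in>I. chi (c' i) = e i"
    using c(1) c0 unfolding c'_def by auto
  ultimately show ?thesis
    by blast
qed

end

section \<open>Unit weights modulo \<open>p\<^sup>2\<close>\<close>

lemma zero_sum_by_pairing:
  fixes x :: "'a \<Rightarrow> 'b::comm_ring"
  assumes "finite S" "even (card S)"
    and "\<forall>i\<in>S. \<forall>j\<in>S. i \<noteq> j \<longrightarrow> (\<exists>bi bj. G i bi \<and> G j bj \<and> bi * x i + bj * x j = 0)"
  shows "\<exists>b. (\<forall>i\<in>S. G i (b i)) \<and> (\<Sum>i\<in>S. b i * x i) = 0"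
  using assms
proof (induction "card S" arbitrary: S rule: less_induct)
  case less
  show ?case
  proof (cases "S = {}")
    case True
    then show ?thesis
      by simp
  next
    case False
    then have "card S \<noteq> 0"
      using less.prems(1) by simp
    with less.prems(2) have "Suc (Suc 0) \<le> card S"
      by presburger
    then obtain i j S' where S: "S = insert i (insert j S')" "i \<notin> insert j S'" "j \<notin> S'" "finite S'"
      unfolding card_le_Suc_iff by blast
    then have i: "i \<in> S" and j: "j \<in> S" "j \<noteq> i"
      by auto
    have "card S = Suc (Suc (card S'))"
      using S by simp
    then have "card S' < card S" "even (card S')"
      using less.prems(2) by simp_all
    moreover have "\<forall>k\<in>S'. \<forall>l\<in>S'. k \<noteq> l \<longrightarrow> (\<exists>bk bl. G k bk \<and> G l bl \<and> bk * x k + bl * x l = 0)"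
      using less.prems(3) S(1) by blast
    ultimately obtain b where b: "\<forall>k\<in>S'. G k (b k)" "(\<Sum>k\<in>S'. b k * x k) = 0"
      using less.hyps[OF _ S(4)] by blast
    obtain bi bj where bij: "G i bi" "G j bj" "bi * x i + bj * x j = 0"
      using less.prems(3)[rule_format, OF i j(1)] j(2) by blast
    define b' where "b' = b(i := bi, j := bj)"
    have "(\<Sum>k\<in>S'. b' k * x k) = (\<Sum>k\<in>S'. b k * x k)"
      using S by (intro sum.cong) (auto simp: b'_def)
    then have "(\<Sum>k\<in>S. b' k * x k) = bi * x i + bj * x j + (\<Sum>k\<in>S'. b k * x k)"
      using S j(2) by (simp add: b'_def)
    moreover have "\<forall>k\<in>S. G k (b' k)"
      using b(1) bij S j(2) by (auto simp: b'_def)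
    ultimately show ?thesis
      using b(2) bij(3) by auto
  qed
qed

lemma exact_factor:
  fixes x :: int
  assumes "int p dvd x" "\<not> int p ^ 2 dvd x"
  shows "x = int p * (x div int p)" "\<not> int p dvd x div int p"
proof -
  show x: "x = int p * (x div int p)"
    using assms(1) by simp
  show "\<not> int p dvd x div int p"
  proof
    assume "int p dvd x div int p"
    then have "int p * int p dvd int p * (x div int p)"
      by (rule mult_dvd_mono[OF dvd_refl])
    with x assms(2) show False
      by (simp add: power2_eq_square)
  qed
qed

lemma unit_zero_sum_same_valuation:
  fixes x w :: "'a \<Rightarrow> int"
  assumes "finite S" "even (card S)"
    and x: "\<forall>i\<in>S. x i = g * w i" and w: "\<forall>i\<in>S. \<not> int p dvd w i"
  shows "\<exists>b. (\<forall>i\<in>S. \<not> int p dvd b i) \<and> (\<Sum>i\<in>S. b i * x i) = 0"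
proof -
  have "\<exists>bi bj. \<not> int p dvd bi \<and> \<not> int p dvd bj \<and> bi * x i + bj * x j = 0"
    if "i \<in> S" "j \<in> S" for i j
    using that x w by (intro exI[of _ "w j"] exI[of _ "- w i"]) (simp add: algebra_simps)
  then show ?thesis
    using zero_sum_by_pairing[where G = "\<lambda>_ b. \<not> int p dvd b", OF assms(1,2)] by blast
qed

text \<open>Terms prime to \<open>p\<close> cancel in pairs, and so do exact multiples of \<open>p\<close>; the rest is divisible
  by \<open>p\<^sup>2\<close>.\<close>

lemma unit_zero_sum_mod_prime_square:
  fixes x :: "'a \<Rightarrow> int"
  assumes p: "prime p" and fin: "finite I"
    and even_p: "even (card (nonzero_mod p x I))"
    and even_p2: "even (card (nonzero_mod (p^2) x I))"
  shows "\<exists>b. (\<forall>i\<in>I. \<not> int p dvd b i) \<and> int p ^ 2 dvd (\<Sum>i\<in>I. b i * x i)"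
proof -
  define U where "U = nonzero_mod p x I"
  define V where "V = nonzero_mod (p^2) x I"
  have UV: "U \<subseteq> V" "V \<subseteq> I"
    unfolding U_def V_def nonzero_mod_def by (auto simp: power2_eq_square)
  have finV: "finite V"
    using UV(2) fin by (rule finite_subset)
  have finU: "finite U"
    using UV(1) finV by (rule finite_subset)
  have "card U \<le> card V"
    by (rule card_mono[OF finV UV(1)])
  then have "even (card (V - U))"
    using even_p even_p2 card_Diff_subset[OF finU UV(1)] unfolding U_def V_def by presburger
  have "\<forall>i\<in>U. x i = 1 * x i \<and> \<not> int p dvd x i"
    unfolding U_def nonzero_mod_def by simp
  then obtain bU where bU: "\<forall>i\<in>U. \<not> int p dvd bU i" "(\<Sum>i\<in>U. bU i * x i) = 0"
    using unit_zero_sum_same_valuation[OF finU even_p[folded U_def], of x 1 x] by blast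
  have "\<forall>i\<in>V - U. x i = int p * (x i div int p) \<and> \<not> int p dvd x i div int p"
    using exact_factor unfolding U_def V_def nonzero_mod_def by auto
  then obtain bT where bT: "\<forall>i\<in>V - U. \<not> int p dvd bT i" "(\<Sum>i\<in>V - U. bT i * x i) = 0"
    using unit_zero_sum_same_valuation[of "V - U" x "int p" "\<lambda>i. x i div int p"] finV
      \<open>even (card (V - U))\<close> by blast
  define b where "b i = (if i \<in> U then bU i else if i \<in> V then bT i else 1)" for i
  have "(\<Sum>i\<in>I. b i * x i) = (\<Sum>i\<in>I - V. b i * x i) + (\<Sum>i\<in>V. b i * x i)"
    by (rule sum.subset_diff[OF UV(2) fin])
  also have "(\<Sum>i\<in>V. b i * x i) = (\<Sum>i\<in>V - U. b i * x i) + (\<Sum>i\<in>U. b i * x i)"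
    by (rule sum.subset_diff[OF UV(1) finV])
  also have "(\<Sum>i\<in>V - U. b i * x i) = (\<Sum>i\<in>V - U. bT i * x i)"
    by (rule sum.cong) (auto simp: b_def)
  also have "(\<Sum>i\<in>U. b i * x i) = (\<Sum>i\<in>U. bU i * x i)"
    by (rule sum.cong) (auto simp: b_def)
  finally have "(\<Sum>i\<in>I. b i * x i) = (\<Sum>i\<in>I - V. b i * x i)"
    using bU(2) bT(2) by simp
  moreover have "int p ^ 2 dvd (\<Sum>i\<in>I - V. b i * x i)"
    by (rule dvd_sum) (auto simp: V_def nonzero_mod_def)
  moreover have "\<not> int p dvd 1"
    using p not_prime_unit[of "int p"] by auto
  then have "\<forall>i\<in>I. \<not> int p dvd b i"
    using bU(1) bT(1) unfolding b_def by auto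
  ultimately show ?thesis
    by auto
qed

section \<open>Sign assignments\<close>

lemma prod_sign:
  assumes "\<forall>a\<in>A. f a = (1::int) \<or> f a = -1"
  shows "prod f A = 1 \<or> prod f A = -1"
  using assms by (induction A rule: infinite_finite_induct) auto

lemma exists_preferring_choice: "\<exists>F. \<forall>S. S \<noteq> {} \<longrightarrow> F S \<in> S \<and> ((\<exists>k\<in>S. R k) \<longrightarrow> R (F S))"
proof -
  define F where "F S = (if \<exists>k\<in>S. R k then SOME k. k \<in> S \<and> R k else SOME k. k \<in> S)" for S
  have "F S \<in> S \<and> ((\<exists>k\<in>S. R k) \<longrightarrow> R (F S))" if "S \<noteq> {}" for S
  proof (cases "\<exists>k\<in>S. R k")
    case True
    then show ?thesis
      using someI_ex[of "\<lambda>k. k \<in> S \<and> R k"] unfolding F_def by auto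
  next
    case False
    then show ?thesis
      using that some_in_eq[of S] unfolding F_def by auto
  qed
  then show ?thesis
    by blast
qed

text \<open>Every index with a free slot puts there the product of its other signs.\<close>

lemma exists_sign_absorbing:
  fixes \<beta> :: "'a \<Rightarrow> 'q \<Rightarrow> int"
  assumes fin: "finite P" and \<beta>: "\<forall>i q. \<beta> i q = 1 \<or> \<beta> i q = -1"
  shows "\<exists>\<epsilon>. (\<forall>i q. \<epsilon> i q = 1 \<or> \<epsilon> i q = -1) \<and> (\<forall>i q. q \<notin> Free i \<longrightarrow> \<epsilon> i q = \<beta> i q)
    \<and> (\<forall>i. P \<inter> Free i \<noteq> {} \<longrightarrow> (\<Prod>q\<in>P. \<epsilon> i q) = 1)"
proof -
  define slot where "slot i = (SOME q. q \<in> P \<inter> Free i)" for i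
  define \<epsilon> where "\<epsilon> i q = (if P \<inter> Free i \<noteq> {} \<and> q = slot i then \<Prod>q'\<in>P - {q}. \<beta> i q' else \<beta> i q)"
    for i q
  have slot: "slot i \<in> P \<inter> Free i" if "P \<inter> Free i \<noteq> {}" for i
    using that some_in_eq[of "P \<inter> Free i"] unfolding slot_def by blast
  have "\<epsilon> i q = 1 \<or> \<epsilon> i q = -1" for i q
    unfolding \<epsilon>_def using \<beta> prod_sign[of "P - {q}" "\<beta> i"] by auto
  moreover have "\<epsilon> i q = \<beta> i q" if "q \<notin> Free i" for i q
    using that slot unfolding \<epsilon>_def by auto
  moreover have "(\<Prod>q\<in>P. \<epsilon> i q) = 1" if "P \<inter> Free i \<noteq> {}" for i
  proof -
    have "(\<Prod>q\<in>P - {slot i}. \<epsilon> i q) = (\<Prod>q\<in>P - {slot i}. \<beta> i q)"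
      unfolding \<epsilon>_def by (rule prod.cong) auto
    then have "(\<Prod>q\<in>P. \<epsilon> i q) = (\<Prod>q\<in>P - {slot i}. \<beta> i q) * (\<Prod>q\<in>P - {slot i}. \<beta> i q)"
      using that slot[OF that] fin by (simp add: prod.remove[of P "slot i"] \<epsilon>_def)
    then show ?thesis
      using prod_sign[of "P - {slot i}" "\<beta> i"] \<beta> by auto
  qed
  ultimately show ?thesis
    by (intro exI[of _ \<epsilon>]) blast
qed

text \<open>A required \<open>-1\<close> at \<open>q\<close> is carried by \<open>F (N q)\<close>, a member of \<open>N q\<close> with a free slot whenever
  there is one. If \<open>i\<close> has no free slot but carries a \<open>-1\<close>, neither member of that pair has one,
  so the pair is \<open>N q\<close> for every \<open>q\<close> and \<open>i\<close> carries exactly the \<open>d q = -1\<close>.\<close>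

lemma carrier_signs_product:
  fixes N :: "'q \<Rightarrow> 'a set" and d :: "'q \<Rightarrow> int" and F :: "'a set \<Rightarrow> 'a"
  assumes d: "\<forall>q\<in>P. \<forall>i j. i \<noteq> j \<longrightarrow> N q = {i, j} \<longrightarrow> d q = 1 \<or> d q = -1"
    and pairs: "\<forall>i j. i \<noteq> j \<longrightarrow> P \<noteq> {} \<longrightarrow> (\<forall>q\<in>P. N q = {i, j}) \<longrightarrow> (\<Prod>q\<in>P. d q) = 1"
    and F: "\<forall>S. S \<noteq> {} \<longrightarrow> F S \<in> S \<and> ((\<exists>k\<in>S. R k) \<longrightarrow> R (F S))"
    and R: "\<forall>k. \<not> R k \<longrightarrow> (\<forall>q\<in>P. card (N q) = 2 \<and> k \<in> N q)"
    and i: "\<not> R i"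
  shows "(\<Prod>q\<in>P. if card (N q) = 2 \<and> d q = -1 \<and> F (N q) = i then -1 else 1) = (1::int)"
    (is "(\<Prod>q\<in>P. ?\<beta> q) = 1")
proof (cases "\<forall>q\<in>P. ?\<beta> q = 1")
  case True
  then show ?thesis
    by simp
next
  case False
  then obtain q0 where q0: "q0 \<in> P" "F (N q0) = i" "d q0 = -1"
    by (auto split: if_splits)
  have Ni: "card (N q) = 2 \<and> i \<in> N q" if "q \<in> P" for q
    using R i that by blast
  have "card (N q0 - {i}) = 1"
    using Ni[OF q0(1)] by simp
  then obtain j where "N q0 - {i} = {j}"
    by (rule card_1_singletonE)
  then have j: "N q0 = {i, j}" "i \<noteq> j"
    using Ni[OF q0(1)] by auto
  have "\<not> R j"
    using F q0(2) i j(1) by blast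
  then have N_eq: "N q = {i, j}" if "q \<in> P" for q
    using Ni[OF that] R that j(2)
    by (intro card_subset_eq[symmetric]) (auto simp: card_ge_0_finite)
  have "?\<beta> q = d q" if "q \<in> P" for q
  proof -
    have "d q = 1 \<or> d q = -1"
      using d that N_eq[OF that] j(2) by blast
    then show ?thesis
      using N_eq[OF that] N_eq[OF q0(1)] q0(2) j(2) by auto
  qed
  then have "(\<Prod>q\<in>P. ?\<beta> q) = (\<Prod>q\<in>P. d q)"
    by simp
  also have "\<dots> = 1"
    using pairs[rule_format, OF j(2)] q0(1) N_eq by blast
  finally show ?thesis .
qed

lemma sign_assignment_exists:
  fixes N :: "'q \<Rightarrow> 'a set" and d :: "'q \<Rightarrow> int"
  assumes fin: "finite P"
    and d: "\<forall>q\<in>P. \<forall>i j. i \<noteq> j \<longrightarrow> N q = {i, j} \<longrightarrow> d q = 1 \<or> d q = -1"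
    and pairs: "\<forall>i j. i \<noteq> j \<longrightarrow> P \<noteq> {} \<longrightarrow> (\<forall>q\<in>P. N q = {i, j}) \<longrightarrow> (\<Prod>q\<in>P. d q) = 1"
  shows "\<exists>\<epsilon>. (\<forall>i q. \<epsilon> i q = 1 \<or> \<epsilon> i q = -1) \<and> (\<forall>i. (\<Prod>q\<in>P. \<epsilon> i q) = 1)
    \<and> (\<forall>q\<in>P. \<forall>i j. i \<noteq> j \<longrightarrow> N q = {i, j} \<longrightarrow> \<epsilon> i q * \<epsilon> j q = d q)"
proof -
  define Free where "Free i = {q. \<not> (card (N q) = 2 \<and> i \<in> N q)}" for i
  obtain F where F: "\<forall>S. S \<noteq> {} \<longrightarrow> F S \<in> S \<and> ((\<exists>k\<in>S. P \<inter> Free k \<noteq> {}) \<longrightarrow> P \<inter> Free (F S) \<noteq> {})"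
    using exists_preferring_choice[of "\<lambda>k. P \<inter> Free k \<noteq> {}"] by blast
  define \<beta> where "\<beta> i q = (if card (N q) = 2 \<and> d q = -1 \<and> F (N q) = i then -1 else (1::int))" for i q
  have "\<forall>i q. \<beta> i q = 1 \<or> \<beta> i q = -1"
    unfolding \<beta>_def by simp
  then obtain \<epsilon> where \<epsilon>: "\<forall>i q. \<epsilon> i q = 1 \<or> \<epsilon> i q = -1" "\<forall>i q. q \<notin> Free i \<longrightarrow> \<epsilon> i q = \<beta> i q"
    "\<forall>i. P \<inter> Free i \<noteq> {} \<longrightarrow> (\<Prod>q\<in>P. \<epsilon> i q) = 1"
    using exists_sign_absorbing[where \<beta> = \<beta> and Free = Free, OF fin] by blast
  have "\<epsilon> i q * \<epsilon> j q = d q" if "q \<in> P" "i \<noteq> j" "N q = {i, j}" for q i j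
  proof -
    have "\<epsilon> i q = \<beta> i q" "\<epsilon> j q = \<beta> j q"
      using \<epsilon>(2) that unfolding Free_def by auto
    moreover have "F (N q) = i \<or> F (N q) = j"
      using F that(3) by blast
    ultimately show ?thesis
      using d that unfolding \<beta>_def by auto
  qed
  moreover have "(\<Prod>q\<in>P. \<epsilon> i q) = 1" for i
  proof (cases "P \<inter> Free i = {}")
    case True
    then have "(\<Prod>q\<in>P. \<epsilon> i q) = (\<Prod>q\<in>P. \<beta> i q)"
      using \<epsilon>(2) by (intro prod.cong) auto
    also have "\<dots> = 1"
      unfolding \<beta>_def using d pairs F True
      by (intro carrier_signs_product[where R = "\<lambda>k. P \<inter> Free k \<noteq> {}"]) (auto simp: Free_def)
    finally show ?thesis .
  next
    case False
    then show ?thesis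
      using \<epsilon>(3) by blast
  qed
  ultimately show ?thesis
    using \<epsilon>(1) by blast
qed

section \<open>Gluing local weights\<close>

lemma prime_power_moduli_coprime:
  fixes n :: nat
  assumes "r \<in> prime_factors n" "s \<in> prime_factors n" "r \<noteq> s"
  shows "coprime (r ^ multiplicity r n) (s ^ multiplicity s n)"
proof -
  have "prime r" "prime s"
    using assms(1,2) by auto
  then have "coprime r s"
    using assms(3) by (rule primes_coprime)
  then show ?thesis
    by simp
qed

lemma crt_prime_powers:
  fixes c :: "nat \<Rightarrow> int"
  assumes n: "n > 0"
  shows "\<exists>a<n. \<forall>r\<in>prime_factors n. [int a = c r] (mod int r ^ multiplicity r n)"
proof -
  let ?m = "\<lambda>r. r ^ multiplicity r n"
  have n_eq: "(\<Prod>r\<in>prime_factors n. ?m r) = n"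
    by (rule prime_factorization_nat[OF n, symmetric])
  have "\<forall>r\<in>prime_factors n. ?m r \<noteq> 0"
    using prime_factors_gt_0_nat by simp
  moreover have "\<forall>r\<in>prime_factors n. \<forall>s\<in>prime_factors n. r \<noteq> s \<longrightarrow> coprime (?m r) (?m s)"
    using prime_power_moduli_coprime by blast
  ultimately have "\<exists>!a. a < (\<Prod>r\<in>prime_factors n. ?m r) \<and>
      (\<forall>r\<in>prime_factors n. [a = nat (c r mod int (?m r))] (mod ?m r))"
    by (intro chinese_remainder_unique_nat) simp_all
  then obtain a where a: "a < n" "\<forall>r\<in>prime_factors n. [a = nat (c r mod int (?m r))] (mod ?m r)"
    unfolding n_eq by (auto dest: ex1_implies_ex)
  have "[int a = c r] (mod int r ^ multiplicity r n)" if r: "r \<in> prime_factors n" for r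
  proof -
    have "0 < int (?m r)"
      using prime_factors_gt_0_nat[OF r] by simp
    then have "int (nat (c r mod int (?m r))) = c r mod int (?m r)"
      by simp
    moreover have "[int a = int (nat (c r mod int (?m r)))] (mod int (?m r))"
      using a(2) r cong_int_iff by blast
    ultimately have "[int a = c r mod int (?m r)] (mod int (?m r))"
      by simp
    then show ?thesis
      by (simp add: cong_def)
  qed
  with a(1) show ?thesis
    by blast
qed

lemma dvd_of_prime_power_parts:
  fixes s :: int
  assumes n: "n > 0" and parts: "\<forall>r\<in>prime_factors n. int r ^ multiplicity r n dvd s"
  shows "int n dvd s"
proof -
  have "\<forall>r\<in>prime_factors n. [s = 0] (mod int (r ^ multiplicity r n))"
    using parts by (simp add: cong_0_iff)
  moreover have "\<forall>r\<in>prime_factors n. \<forall>t\<in>prime_factors n. r \<noteq> t \<longrightarrow>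
      coprime (int (r ^ multiplicity r n)) (int (t ^ multiplicity t n))"
    using prime_power_moduli_coprime by (simp only: coprime_int_iff) blast
  ultimately have "[s = 0] (mod (\<Prod>r\<in>prime_factors n. int (r ^ multiplicity r n)))"
    by (rule cong_cong_prod_coprime)
  moreover have "(\<Prod>r\<in>prime_factors n. int (r ^ multiplicity r n)) = int n"
    by (simp only: of_nat_prod[symmetric] prime_factorization_nat[OF n, symmetric])
  ultimately show ?thesis
    by (simp add: cong_0_iff)
qed

lemma S_set_memberI:
  assumes n: "n > 0" "a < n"
    and cong: "\<forall>r\<in>prime_factors n. [int a = c r] (mod int r)"
    and units: "\<forall>r\<in>prime_factors n. \<not> int r dvd c r"
    and jacobi: "(\<Prod>r\<in>prime_factors n. Legendre (c r) r ^ multiplicity r n) = 1"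
  shows "a \<in> S_set n"
proof -
  have "coprime a (r ^ multiplicity r n)" if r: "r \<in> prime_factors n" for r
  proof -
    have "\<not> int r dvd int a"
      using cong_dvd_iff[of "int a" "c r" "int r"] cong units r by blast
    then have "\<not> r dvd a"
      by simp
    then show ?thesis
      using prime_imp_power_coprime[OF in_prime_factors_imp_prime[OF r]] by blast
  qed
  then have "coprime a (\<Prod>r\<in>prime_factors n. r ^ multiplicity r n)"
    by (rule prod_coprime_right)
  then have "coprime a n"
    by (simp only: prime_factorization_nat[OF n(1), symmetric])
  moreover have "jacobi_sym a n = (\<Prod>r\<in>prime_factors n. Legendre (c r) r ^ multiplicity r n)"
    unfolding jacobi_sym_def using cong Legendre_cong by (intro prod.cong) auto
  ultimately show ?thesis
    unfolding S_set_def using jacobi n(2) by simp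
qed

lemma S_set_weights_from_local:
  fixes x :: "'a \<Rightarrow> int" and c :: "nat \<Rightarrow> 'a \<Rightarrow> int"
  assumes n: "n > 0"
    and units: "\<forall>r\<in>prime_factors n. \<forall>i\<in>I. \<not> int r dvd c r i"
    and jacobi: "\<forall>i\<in>I. (\<Prod>r\<in>prime_factors n. Legendre (c r i) r ^ multiplicity r n) = 1"
    and local: "\<forall>r\<in>prime_factors n. int r ^ multiplicity r n dvd (\<Sum>i\<in>I. c r i * x i)"
  shows "\<exists>a. (\<forall>i\<in>I. a i \<in> S_set n) \<and> int n dvd (\<Sum>i\<in>I. int (a i) * x i)"
proof -
  have "\<exists>a. \<forall>i. a i < n \<and> (\<forall>r\<in>prime_factors n. [int (a i) = c r i] (mod int r ^ multiplicity r n))"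
    using crt_prime_powers[OF n, of "\<lambda>r. c r _"] by (intro choice) blast
  then obtain a where a: "\<forall>i. a i < n \<and>
      (\<forall>r\<in>prime_factors n. [int (a i) = c r i] (mod int r ^ multiplicity r n))" ..
  then have a_less: "a i < n"
    and a_cong: "r \<in> prime_factors n \<Longrightarrow> [int (a i) = c r i] (mod int r ^ multiplicity r n)" for i r
    by auto
  have a_cong_r: "[int (a i) = c r i] (mod int r)" if r: "r \<in> prime_factors n" for i r
  proof -
    have "multiplicity r n \<noteq> 0"
      using r by (simp add: prime_factors_multiplicity)
    then have "int r dvd int r ^ multiplicity r n"
      by simp
    with a_cong[OF r] show ?thesis
      by (rule cong_dvd_modulus)
  qed
  have "a i \<in> S_set n" if "i \<in> I" for i
    using S_set_memberI[OF n a_less, of i "\<lambda>r. c r i"] a_cong_r units jacobi that by blast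
  moreover have "int n dvd (\<Sum>i\<in>I. int (a i) * x i)"
  proof (rule dvd_of_prime_power_parts[OF n], intro ballI)
    fix r
    assume r: "r \<in> prime_factors n"
    have sums: "[(\<Sum>i\<in>I. int (a i) * x i) = (\<Sum>i\<in>I. c r i * x i)] (mod int r ^ multiplicity r n)"
      using a_cong[OF r] by (intro cong_sum cong_scalar_right)
    show "int r ^ multiplicity r n dvd (\<Sum>i\<in>I. int (a i) * x i)"
      using cong_dvd_iff[OF sums] local r by blast
  qed
  ultimately show ?thesis
    by blast
qed

section \<open>Even subsets and the lower bound\<close>

lemma even_card_symdiff:
  assumes "finite A" "finite B"
  shows "even (card ((A - B) \<union> (B - A))) \<longleftrightarrow> (even (card A) \<longleftrightarrow> even (card B))"
proof -
  have "card ((A - B) \<union> (B - A)) = card (A - B) + card (B - A)"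
    using assms by (intro card_Un_disjoint) auto
  moreover have "card (A - B) = card A - card (A \<inter> B)" "card (B - A) = card B - card (A \<inter> B)"
    using assms by (simp_all add: card_Diff_subset_Int Int_commute)
  moreover have "card (A \<inter> B) \<le> card A" "card (A \<inter> B) \<le> card B"
    using assms by (simp_all add: card_mono)
  ultimately show ?thesis
    by presburger
qed

text \<open>The parity vectors of the \<open>2\<^bsup>|E|\<^esup>\<close> subsets of \<open>E\<close> cannot all be distinct, and the
  symmetric difference of two subsets with equal parity vectors has even intersections.\<close>

lemma exists_even_intersections:
  fixes C :: "'m \<Rightarrow> 'a set"
  assumes E: "finite E" and M: "finite M" and less: "card M < card E"
  shows "\<exists>I\<subseteq>E. I \<noteq> {} \<and> (\<forall>m\<in>M. even (card (I \<inter> C m)))"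
proof -
  define f where "f I = {m\<in>M. odd (card (I \<inter> C m))}" for I
  have "\<not> inj_on f (Pow E)"
  proof
    assume "inj_on f (Pow E)"
    moreover have "f ` Pow E \<subseteq> Pow M"
      unfolding f_def by auto
    ultimately have "card (Pow E) \<le> card (Pow M)"
      using M by (intro card_inj_on_le) auto
    then show False
      using E M less by (simp add: card_Pow)
  qed
  then obtain I1 I2 where I: "I1 \<subseteq> E" "I2 \<subseteq> E" "I1 \<noteq> I2" "f I1 = f I2"
    unfolding inj_on_def by blast
  have fin: "finite (I1 \<inter> C m)" "finite (I2 \<inter> C m)" for m
    using I(1,2) E by (auto intro: finite_subset)
  have "even (card (((I1 - I2) \<union> (I2 - I1)) \<inter> C m))" if "m \<in> M" for m
  proof -
    have "odd (card (I1 \<inter> C m)) \<longleftrightarrow> odd (card (I2 \<inter> C m))"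
      using I(4) that unfolding f_def by blast
    moreover have "((I1 - I2) \<union> (I2 - I1)) \<inter> C m
        = ((I1 \<inter> C m) - (I2 \<inter> C m)) \<union> ((I2 \<inter> C m) - (I1 \<inter> C m))"
      by blast
    ultimately show ?thesis
      using even_card_symdiff[OF fin] by simp
  qed
  moreover have "(I1 - I2) \<union> (I2 - I1) \<subseteq> E" "(I1 - I2) \<union> (I2 - I1) \<noteq> {}"
    using I(1-3) by auto
  ultimately show ?thesis
    by blast
qed

lemma prod_list_take_dvd:
  fixes xs :: "'a::comm_monoid_mult list"
  assumes "m \<le> k"
  shows "prod_list (take m xs) dvd prod_list (take k xs)"
proof -
  have "take k xs = take m (take k xs) @ drop m (take k xs)"
    by (rule append_take_drop_id[symmetric])
  then have "prod_list (take k xs) = prod_list (take m (take k xs)) * prod_list (drop m (take k xs))"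
    by (metis prod_list.append)
  also have "take m (take k xs) = take m xs"
    using assms by (simp add: min_def)
  finally have split: "prod_list (take k xs) = prod_list (take m xs) * prod_list (drop m (take k xs))" .
  show ?thesis
    by (subst split) simp
qed

text \<open>The partial products \<open>1, r\<^sub>1, r\<^sub>1 r\<^sub>2, \<dots>\<close> of a prime factorisation: in a weighted zero-sum,
  the prime following the first used partial product would divide its unit weight.\<close>

lemma partial_products_zero_sum_free:
  fixes ps :: "nat list"
  assumes primes: "\<forall>r\<in>set ps. prime r" and units: "\<forall>a\<in>A. coprime a (prod_list ps)"
    and k: "k \<le> length ps"
  shows "\<not> has_A_zero_sum_subseq (prod_list ps) A (map (\<lambda>j. prod_list (take j ps)) [0..<k])"
proof
  define d where "d j = prod_list (take j ps)" for j
  assume "has_A_zero_sum_subseq (prod_list ps) A (map (\<lambda>j. prod_list (take j ps)) [0..<k])"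
  then obtain I a where I: "I \<subseteq> {..<k}" "I \<noteq> {}" "\<forall>i\<in>I. a i \<in> A"
    and zero: "prod_list ps dvd (\<Sum>i\<in>I. a i * map d [0..<k] ! i)"
    unfolding has_A_zero_sum_subseq_def d_def by (auto simp: cong_0_iff)
  have finI: "finite I"
    using I(1) finite_subset by blast
  define j where "j = Min I"
  have j: "j \<in> I" "\<forall>i\<in>I. j \<le> i"
    using finI I(2) unfolding j_def by auto
  then have "j < length ps"
    using I(1) k by auto
  define r where "r = ps ! j"
  have r: "prime r" "r dvd prod_list ps"
    using primes \<open>j < length ps\<close> unfolding r_def by (auto simp: prod_list_dvd)
  have d_Suc: "d (Suc j) = d j * r"
    unfolding d_def r_def using \<open>j < length ps\<close> by (simp add: take_Suc_conv_app_nth)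
  have "d (Suc j) dvd prod_list ps"
    using prod_list_take_dvd[of "Suc j" "length ps" ps] \<open>j < length ps\<close> unfolding d_def by simp
  moreover have "(\<Sum>i\<in>I. a i * map d [0..<k] ! i) = (\<Sum>i\<in>I. a i * d i)"
    using I(1) by (intro sum.cong) auto
  moreover have "(\<Sum>i\<in>I. a i * d i) = a j * d j + (\<Sum>i\<in>I - {j}. a i * d i)"
    using finI j(1) by (rule sum.remove)
  moreover have "d (Suc j) dvd (\<Sum>i\<in>I - {j}. a i * d i)"
  proof (rule dvd_sum)
    fix i
    assume "i \<in> I - {j}"
    then have "Suc j \<le> i"
      using j(2) by (simp add: Suc_le_eq le_neq_implies_less)
    show "d (Suc j) dvd a i * d i"
      unfolding d_def using prod_list_take_dvd[OF \<open>Suc j \<le> i\<close>] by (rule dvd_mult)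
  qed
  ultimately have "d j * r dvd a j * d j"
    using zero d_Suc by (metis dvd_add_left_iff dvd_trans)
  moreover have "0 \<notin> set (take j ps)"
    using primes in_set_takeD by fastforce
  then have "d j \<noteq> 0"
    unfolding d_def by (simp add: prod_list_zero_iff)
  ultimately have "r dvd a j"
    by (simp add: mult.commute)
  moreover have "coprime (a j) (prod_list ps)"
    using units I(3) j(1) by blast
  ultimately show False
    using r by (metis coprime_common_divisor coprime_commute not_prime_unit coprime_divisors dvd_refl)
qed

lemma partial_products_less:
  fixes ps :: "nat list"
  assumes primes: "\<forall>r\<in>set ps. prime r" and k: "k \<le> length ps"
  shows "set (map (\<lambda>j. prod_list (take j ps)) [0..<k]) \<subseteq> {..<prod_list ps}"
proof
  fix y
  assume "y \<in> set (map (\<lambda>j. prod_list (take j ps)) [0..<k])"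
  then obtain j where "j < k" and y: "y = prod_list (take j ps)"
    by auto
  with k have j: "j < length ps" "y = prod_list (take j ps)"
    by simp_all
  have "0 \<notin> set ps"
    using primes by auto
  then have "prod_list ps \<noteq> 0"
    by (simp add: prod_list_zero_iff)
  then have "prod_list ps > 0"
    by simp
  moreover have "y * ps ! j dvd prod_list ps"
    using prod_list_take_dvd[of "Suc j" "length ps" ps] j by (simp add: take_Suc_conv_app_nth)
  ultimately have "y * ps ! j \<le> prod_list ps"
    by (rule dvd_imp_le[rotated])
  moreover have "2 \<le> ps ! j"
    using primes j(1) prime_ge_2_nat by auto
  ultimately show "y \<in> {..<prod_list ps}"
    using \<open>prod_list ps > 0\<close> by (cases "y = 0") (auto intro: less_le_trans[of y "y * ps ! j"])
qed

lemma length_prime_factorization_list: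
  fixes n :: nat
  assumes "mset ps = prime_factorization n"
  shows "length ps = big_omega n"
proof -
  have "length ps = size (prime_factorization n)"
    using assms by (metis size_mset)
  also have "\<dots> = (\<Sum>p\<in>prime_factors n. count (prime_factorization n) p)"
    by (rule size_multiset_overloaded_eq)
  also have "\<dots> = big_omega n"
    unfolding big_omega_def by (intro sum.cong) (auto intro: count_prime_factorization_prime)
  finally show ?thesis .
qed

lemma big_omega_less_if_zero_sums:
  fixes n k :: nat
  assumes n: "n > 0" and units: "\<forall>a\<in>A. coprime a n"
    and zero_sums: "\<forall>xs. length xs = k \<and> set xs \<subseteq> {..<n} \<longrightarrow> has_A_zero_sum_subseq n A xs"
  shows "big_omega n < k"
proof (rule ccontr)
  assume "\<not> big_omega n < k"
  obtain ps where ps: "mset ps = prime_factorization n"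
    using ex_mset by blast
  then have "k \<le> length ps"
    using \<open>\<not> big_omega n < k\<close> length_prime_factorization_list by simp
  have "set ps = prime_factors n"
    using ps by (metis set_mset_mset)
  then have primes: "\<forall>r\<in>set ps. prime r"
    by auto
  have "prod_list ps = n"
    using ps n by (metis prod_mset_prod_list prod_mset_prime_factorization_nat)
  define xs where "xs = map (\<lambda>j. prod_list (take j ps)) [0..<k]"
  have "length xs = k" "set xs \<subseteq> {..<n}"
    using partial_products_less[OF primes \<open>k \<le> length ps\<close>] \<open>prod_list ps = n\<close>
    unfolding xs_def by simp_all
  then have "has_A_zero_sum_subseq n A xs"
    using zero_sums by blast
  moreover have "\<not> has_A_zero_sum_subseq n A xs"
    using partial_products_zero_sum_free[OF primes _ \<open>k \<le> length ps\<close>] units \<open>prod_list ps = n\<close>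
    unfolding xs_def by blast
  ultimately show False
    by contradiction
qed

lemma nonzero_mod_eq_Int: "nonzero_mod m x I = I \<inter> {i. \<not> int m dvd x i}"
  by (auto simp: nonzero_mod_def)

lemma nonzero_mod_symdiff:
  "nonzero_mod m x ((A - B) \<union> (B - A)) = (nonzero_mod m x A - nonzero_mod m x B) \<union> (nonzero_mod m x B - nonzero_mod m x A)"
  by (auto simp: nonzero_mod_def)

lemma finite_nonzero_mod: "finite I \<Longrightarrow> finite (nonzero_mod m x I)"
  by (simp add: nonzero_mod_def)

locale prime_square_times_squarefree =
  fixes n p :: nat
  assumes n_pos: "n > 0"
    and p_prime: "prime p" and multiplicity_p: "multiplicity p n = 2"
    and multiplicity_other: "\<forall>q\<in>prime_factors n. q \<noteq> p \<longrightarrow> multiplicity q n = 1"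
    and prime_factors_ge_7: "\<forall>q\<in>prime_factors n. 7 \<le> q"
begin

definition Q :: "nat set" where
  "Q = prime_factors n - {p}"

lemma prime_factors_eq: "prime_factors n = insert p Q"
  using p_prime multiplicity_p unfolding Q_def by (auto simp: prime_factors_multiplicity)

lemma finite_Q: "finite Q" and p_notin_Q: "p \<notin> Q"
  unfolding Q_def by auto

lemma prime_ge_7_Q: "q \<in> Q \<Longrightarrow> prime_ge_7 q"
  using prime_factors_ge_7 unfolding Q_def by unfold_locales auto

lemma multiplicity_Q: "q \<in> Q \<Longrightarrow> multiplicity q n = 1"
  using multiplicity_other unfolding Q_def by blast

lemma big_omega_eq: "big_omega n = card Q + 2"
proof -
  have "big_omega n = multiplicity p n + (\<Sum>q\<in>Q. multiplicity q n)"
    unfolding big_omega_def prime_factors_eq using finite_Q p_notin_Q by simp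
  also have "(\<Sum>q\<in>Q. multiplicity q n) = card Q"
    using multiplicity_Q by simp
  finally show ?thesis
    using multiplicity_p by simp
qed

lemma small_omega_eq: "small_omega n = card Q + 1"
  unfolding small_omega_def prime_factors_eq using finite_Q p_notin_Q by simp

text \<open>The one configuration the local conditions cannot handle: all primes of \<open>Q\<close> see exactly
  the same two terms, and the required characters at \<open>i\<close> and \<open>j\<close> cannot both have product \<open>1\<close>.\<close>

definition exceptional_pair :: "('a \<Rightarrow> int) \<Rightarrow> 'a set \<Rightarrow> 'a \<Rightarrow> 'a \<Rightarrow> bool" where
  "exceptional_pair x I i j \<longleftrightarrow> i \<noteq> j \<and> Q \<noteq> {} \<and> (\<forall>q\<in>Q. nonzero_mod q x I = {i, j})
     \<and> (\<Prod>q\<in>Q. Legendre (- (x i * x j)) q) = -1"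

definition admissible :: "('a \<Rightarrow> int) \<Rightarrow> 'a set \<Rightarrow> bool" where
  "admissible x I \<longleftrightarrow> even (card (nonzero_mod p x I)) \<and> even (card (nonzero_mod (p^2) x I))
     \<and> (\<forall>q\<in>Q. card (nonzero_mod q x I) \<noteq> 1) \<and> (\<forall>i j. \<not> exceptional_pair x I i j)"

lemma Legendre_pair_sign:
  assumes "q \<in> Q" "i \<in> nonzero_mod q x I" "j \<in> nonzero_mod q x I"
  shows "Legendre (- (x i * x j)) q = 1 \<or> Legendre (- (x i * x j)) q = -1"
proof -
  interpret prime_ge_7 q
    by (rule prime_ge_7_Q[OF assms(1)])
  have "\<not> int q dvd x i * x j"
    using assms(2,3) not_dvd_mult unfolding nonzero_mod_def by blast
  then show ?thesis
    using chi_sign by simp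
qed

lemma admissible_signs_exist:
  assumes "admissible x I"
  shows "\<exists>\<epsilon>. (\<forall>i q. \<epsilon> i q = 1 \<or> \<epsilon> i q = -1) \<and> (\<forall>i. (\<Prod>q\<in>Q. \<epsilon> i q) = 1)
    \<and> (\<forall>q\<in>Q. \<forall>i j. i \<noteq> j \<longrightarrow> nonzero_mod q x I = {i, j} \<longrightarrow>
          \<epsilon> i q * \<epsilon> j q = Legendre (- (x i * x j)) q)"
proof -
  define d where "d q = Legendre (- (\<Prod>k\<in>nonzero_mod q x I. x k)) q" for q
  have d_pair: "d q = Legendre (- (x i * x j)) q" if "i \<noteq> j" "nonzero_mod q x I = {i, j}" for q i j
    using that unfolding d_def by simp
  have "\<forall>q\<in>Q. \<forall>i j. i \<noteq> j \<longrightarrow> nonzero_mod q x I = {i, j} \<longrightarrow> d q = 1 \<or> d q = -1"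
  proof (intro ballI allI impI)
    fix q i j
    assume "q \<in> Q" "i \<noteq> j" "nonzero_mod q x I = {i, j}"
    then show "d q = 1 \<or> d q = -1"
      using Legendre_pair_sign[of q i x I j] d_pair by simp
  qed
  moreover have "\<forall>i j. i \<noteq> j \<longrightarrow> Q \<noteq> {} \<longrightarrow> (\<forall>q\<in>Q. nonzero_mod q x I = {i, j}) \<longrightarrow>
      (\<Prod>q\<in>Q. d q) = 1"
  proof (intro allI impI)
    fix i j
    assume ij: "i \<noteq> j" "Q \<noteq> {}" "\<forall>q\<in>Q. nonzero_mod q x I = {i, j}"
    have "(\<Prod>q\<in>Q. d q) = (\<Prod>q\<in>Q. Legendre (- (x i * x j)) q)"
      using ij d_pair by simp
    moreover have "\<not> exceptional_pair x I i j"
      using assms unfolding admissible_def by blast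
    then have "(\<Prod>q\<in>Q. Legendre (- (x i * x j)) q) \<noteq> -1"
      using ij by (simp add: exceptional_pair_def)
    moreover have "(\<Prod>q\<in>Q. Legendre (- (x i * x j)) q) = 1 \<or> (\<Prod>q\<in>Q. Legendre (- (x i * x j)) q) = -1"
      by (intro prod_sign ballI Legendre_pair_sign) (use ij in auto)
    ultimately show "(\<Prod>q\<in>Q. d q) = 1"
      by simp
  qed
  ultimately obtain \<epsilon> where \<epsilon>: "\<forall>i q. \<epsilon> i q = 1 \<or> \<epsilon> i q = -1" "\<forall>i. (\<Prod>q\<in>Q. \<epsilon> i q) = 1"
    "\<forall>q\<in>Q. \<forall>i j. i \<noteq> j \<longrightarrow> nonzero_mod q x I = {i, j} \<longrightarrow> \<epsilon> i q * \<epsilon> j q = d q"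
    using sign_assignment_exists[where N = "\<lambda>q. nonzero_mod q x I" and d = d, OF finite_Q] by blast
  have "\<forall>q\<in>Q. \<forall>i j. i \<noteq> j \<longrightarrow> nonzero_mod q x I = {i, j} \<longrightarrow>
      \<epsilon> i q * \<epsilon> j q = Legendre (- (x i * x j)) q"
    using \<epsilon>(3) d_pair by simp
  with \<epsilon>(1,2) show ?thesis
    by blast
qed

lemma admissible_zero_sums_mod_Q:
  assumes fin: "finite I" and adm: "admissible x I"
    and \<epsilon>: "\<forall>i q. \<epsilon> i q = 1 \<or> \<epsilon> i q = -1"
      "\<forall>q\<in>Q. \<forall>i j. i \<noteq> j \<longrightarrow> nonzero_mod q x I = {i, j} \<longrightarrow>
         \<epsilon> i q * \<epsilon> j q = Legendre (- (x i * x j)) q"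
  shows "\<exists>c. \<forall>q\<in>Q. (\<forall>i\<in>I. Legendre (c q i) q = \<epsilon> i q) \<and> int q dvd (\<Sum>i\<in>I. c q i * x i)"
proof -
  have "\<forall>q\<in>Q. \<exists>c. (\<forall>i\<in>I. Legendre (c i) q = \<epsilon> i q) \<and> int q dvd (\<Sum>i\<in>I. c i * x i)"
  proof
    fix q
    assume q: "q \<in> Q"
    interpret prime_ge_7 q
      by (rule prime_ge_7_Q[OF q])
    have "card (nonzero_mod q x I) \<noteq> 1"
      using adm q unfolding admissible_def by blast
    then show "\<exists>c. (\<forall>i\<in>I. chi (c i) = \<epsilon> i q) \<and> int q dvd (\<Sum>i\<in>I. c i * x i)"
      using zero_sum_with_characters[OF fin, of "\<lambda>i. \<epsilon> i q" x] \<epsilon> q by blast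
  qed
  then show ?thesis
    by (rule bchoice)
qed

lemma admissible_zero_sum:
  assumes fin: "finite I" and adm: "admissible x I"
  shows "\<exists>a. (\<forall>i\<in>I. a i \<in> S_set n) \<and> int n dvd (\<Sum>i\<in>I. int (a i) * x i)"
proof -
  obtain b where b: "\<forall>i\<in>I. \<not> int p dvd b i" "int p ^ 2 dvd (\<Sum>i\<in>I. b i * x i)"
    using unit_zero_sum_mod_prime_square[OF p_prime fin] adm unfolding admissible_def by blast
  obtain \<epsilon> where \<epsilon>: "\<forall>i q. \<epsilon> i q = 1 \<or> \<epsilon> i q = -1" "\<forall>i. (\<Prod>q\<in>Q. \<epsilon> i q) = 1"
    "\<forall>q\<in>Q. \<forall>i j. i \<noteq> j \<longrightarrow> nonzero_mod q x I = {i, j} \<longrightarrow>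
       \<epsilon> i q * \<epsilon> j q = Legendre (- (x i * x j)) q"
    using admissible_signs_exist[OF adm] by blast
  obtain c where c: "\<forall>q\<in>Q. (\<forall>i\<in>I. Legendre (c q i) q = \<epsilon> i q) \<and> int q dvd (\<Sum>i\<in>I. c q i * x i)"
    using admissible_zero_sums_mod_Q[OF fin adm \<epsilon>(1) \<epsilon>(3)] by blast
  define w where "w r = (if r = p then b else c r)" for r
  show ?thesis
  proof (rule S_set_weights_from_local[OF n_pos, where c = w])
    show "\<forall>r\<in>prime_factors n. \<forall>i\<in>I. \<not> int r dvd w r i"
    proof (intro ballI)
      fix r i
      assume r: "r \<in> prime_factors n" and i: "i \<in> I"
      show "\<not> int r dvd w r i"
      proof (cases "r = p")
        case True
        then show ?thesis
          using b(1) i by (simp add: w_def)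
      next
        case False
        then have "r \<in> Q"
          using r prime_factors_eq by simp
        then have "Legendre (c r i) r = \<epsilon> i r"
          using c i by blast
        then have "Legendre (c r i) r \<noteq> 0"
          using \<epsilon>(1) by (metis zero_neq_neg_one zero_neq_one)
        then show ?thesis
          using False Legendre_eq_0_iff[of "c r i" "int r"] by (simp add: w_def)
      qed
    qed
    show "\<forall>i\<in>I. (\<Prod>r\<in>prime_factors n. Legendre (w r i) r ^ multiplicity r n) = 1"
    proof
      fix i
      assume i: "i \<in> I"
      have "Legendre (b i) p ^ 2 = 1"
        using Legendre_cases[of "int p" "b i"] b(1) i by auto
      moreover have "(\<Prod>q\<in>Q. Legendre (w q i) q ^ multiplicity q n) = (\<Prod>q\<in>Q. \<epsilon> i q)"
        using c i multiplicity_Q p_notin_Q unfolding w_def by (intro prod.cong) auto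
      ultimately show "(\<Prod>r\<in>prime_factors n. Legendre (w r i) r ^ multiplicity r n) = 1"
        unfolding prime_factors_eq using finite_Q p_notin_Q multiplicity_p \<epsilon>(2) by (simp add: w_def)
    qed
    show "\<forall>r\<in>prime_factors n. int r ^ multiplicity r n dvd (\<Sum>i\<in>I. w r i * x i)"
      unfolding prime_factors_eq using b(2) c multiplicity_p multiplicity_Q p_notin_Q
      by (auto simp: w_def)
  qed
qed

text \<open>Removing an exceptional pair \<open>i, j\<close> of \<open>I\<close>: a set \<open>R\<close> avoiding \<open>i, j\<close>, with even counts
  modulo \<open>p\<close> and \<open>p\<^sup>2\<close> and a term \<open>k\<close> prime to some \<open>q\<^sub>0 \<in> Q\<close>, is added to \<open>I\<close> by symmetric
  difference; then \<open>i, j, k\<close> are all prime to \<open>q\<^sub>0\<close>.\<close>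

lemma admissible_symdiff:
  assumes fin: "finite I" "finite R"
    and even_I: "even (card (nonzero_mod p x I))" "even (card (nonzero_mod (p^2) x I))"
    and even_R: "even (card (nonzero_mod p x R))" "even (card (nonzero_mod (p^2) x R))"
    and ij: "i \<noteq> j" "i \<notin> R" "j \<notin> R" and N: "\<forall>q\<in>Q. nonzero_mod q x I = {i, j}"
    and k: "q0 \<in> Q" "k \<in> nonzero_mod q0 x R"
  shows "admissible x ((I - R) \<union> (R - I))"
proof -
  define I' where "I' = (I - R) \<union> (R - I)"
  have "k \<in> R" "\<not> int q0 dvd x k"
    using k(2) unfolding nonzero_mod_def by auto
  have "k \<notin> I"
  proof
    assume "k \<in> I"
    then have "k \<in> nonzero_mod q0 x I"
      using \<open>\<not> int q0 dvd x k\<close> unfolding nonzero_mod_def by simp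
    then show False
      using N k(1) ij(2,3) \<open>k \<in> R\<close> by auto
  qed
  then have "k \<noteq> i" "k \<noteq> j" and ijk: "{i, j, k} \<subseteq> nonzero_mod q0 x I'"
    using k N ij unfolding I'_def nonzero_mod_def by blast+
  have "even (card (nonzero_mod p x I'))" "even (card (nonzero_mod (p^2) x I'))"
    unfolding I'_def nonzero_mod_symdiff using even_I even_R fin
    by (simp_all add: even_card_symdiff finite_nonzero_mod)
  moreover have "card (nonzero_mod q x I') \<noteq> 1" if "q \<in> Q" for q
  proof -
    have "{i, j} \<subseteq> nonzero_mod q x I'"
      using that N ij unfolding I'_def nonzero_mod_def by blast
    then have "card {i, j} \<le> card (nonzero_mod q x I')"
      using fin unfolding I'_def by (intro card_mono finite_nonzero_mod) auto
    then show ?thesis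
      using ij(1) by simp
  qed
  moreover have "\<not> exceptional_pair x I' a b" for a b
  proof
    assume "exceptional_pair x I' a b"
    then have "{i, j, k} \<subseteq> {a, b}"
      using k(1) ijk unfolding exceptional_pair_def by blast
    then show False
      using ij(1) \<open>k \<noteq> i\<close> \<open>k \<noteq> j\<close> by auto
  qed
  ultimately show ?thesis
    unfolding admissible_def I'_def by blast
qed

lemma admissible_near_exceptional:
  assumes Q: "card Q \<noteq> 1" and E: "finite E" "card E = card Q + 3" and I: "I \<subseteq> E"
    and even: "even (card (nonzero_mod p x I))" "even (card (nonzero_mod (p^2) x I))"
    and exc: "exceptional_pair x I i j"
  shows "\<exists>I'\<subseteq>E. I' \<noteq> {} \<and> admissible x I'"
proof -
  have ij: "i \<noteq> j" "Q \<noteq> {}" and N: "\<forall>q\<in>Q. nonzero_mod q x I = {i, j}"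
    using exc unfolding exceptional_pair_def by blast+
  then have "card Q \<noteq> 0"
    using finite_Q by simp
  with Q have "2 \<le> card Q"
    by linarith
  have "i \<in> I" "j \<in> I"
    using N ij(2) unfolding nonzero_mod_def by blast+
  then have "card (E - {i, j}) = card Q + 1"
    using E I ij(1) by (simp add: card_Diff_subset subset_iff)
  moreover have "card {p, p^2} \<le> 2"
    by (simp add: card_insert_if)
  ultimately have "card {p, p^2} < card (E - {i, j})"
    using \<open>2 \<le> card Q\<close> by simp
  then obtain R where R: "R \<subseteq> E - {i, j}" "R \<noteq> {}"
    "\<forall>m\<in>{p, p^2}. even (card (R \<inter> {k. \<not> int m dvd x k}))"
    using exists_even_intersections[where C = "\<lambda>m. {k. \<not> int m dvd x k}" and E = "E - {i, j}"
        and M = "{p, p^2}"] E(1) by blast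
  then have even_R: "even (card (nonzero_mod p x R))" "even (card (nonzero_mod (p^2) x R))"
    by (simp_all add: nonzero_mod_eq_Int)
  have "finite (E - {i, j})"
    using E(1) by simp
  then have finR: "finite R" "finite I"
    using finite_subset[OF R(1)] finite_subset[OF I E(1)] by simp_all
  show ?thesis
  proof (cases "\<forall>q\<in>Q. nonzero_mod q x R = {}")
    case True
    then have "\<forall>i j. \<not> exceptional_pair x R i j"
      unfolding exceptional_pair_def using ij(2) by blast
    then have "admissible x R"
      using even_R True unfolding admissible_def by simp
    then show ?thesis
      using R by blast
  next
    case False
    then obtain q0 k where "q0 \<in> Q" "k \<in> nonzero_mod q0 x R"
      by blast
    then have "admissible x ((I - R) \<union> (R - I))"
      using admissible_symdiff[OF finR(2) finR(1) even even_R ij(1) _ _ N] R(1) by blast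
    moreover have "(I - R) \<union> (R - I) \<subseteq> E" "(I - R) \<union> (R - I) \<noteq> {}"
      using I R(1) \<open>i \<in> I\<close> by auto
    ultimately show ?thesis
      by blast
  qed
qed

lemma admissible_subset_exists:
  assumes Q: "card Q \<noteq> 1" and E: "finite E" "card E = card Q + 3"
  shows "\<exists>I\<subseteq>E. I \<noteq> {} \<and> admissible x I"
proof -
  define M where "M = insert p (insert (p^2) Q)"
  have "card M \<le> card Q + 2"
    unfolding M_def using finite_Q by (simp add: card_insert_if)
  then have "card M < card E"
    using E(2) by simp
  then obtain I where I: "I \<subseteq> E" "I \<noteq> {}" "\<forall>m\<in>M. even (card (I \<inter> {k. \<not> int m dvd x k}))"
    using exists_even_intersections[where C = "\<lambda>m. {k. \<not> int m dvd x k}" and E = E and M = M]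
      E(1) finite_Q unfolding M_def by blast
  then have "even (card (nonzero_mod m x I))" if "m \<in> M" for m
    using that by (simp add: nonzero_mod_eq_Int)
  then have even_p: "even (card (nonzero_mod p x I))" "even (card (nonzero_mod (p^2) x I))"
    and even_Q: "\<forall>q\<in>Q. even (card (nonzero_mod q x I))"
    unfolding M_def by simp_all
  show ?thesis
  proof (cases "\<exists>i j. exceptional_pair x I i j")
    case True
    then obtain i j where "exceptional_pair x I i j"
      by blast
    from admissible_near_exceptional[OF Q E I(1) even_p this] show ?thesis .
  next
    case False
    have "\<forall>q\<in>Q. card (nonzero_mod q x I) \<noteq> 1"
      using even_Q by (metis odd_one)
    then have "admissible x I"
      using even_p False unfolding admissible_def by blast
    then show ?thesis
      using I by blast
  qed
qed

lemma zero_sum_subseq_exists: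
  assumes "card Q \<noteq> 1" and "length xs = card Q + 3"
  shows "has_A_zero_sum_subseq n (S_set n) xs"
proof -
  obtain I where I: "I \<subseteq> {..<length xs}" "I \<noteq> {}" "admissible (\<lambda>i. int (xs ! i)) I"
    using admissible_subset_exists[of "{..<length xs}"] assms by auto
  moreover have "finite I"
    using I(1) finite_subset by blast
  ultimately obtain a where a: "\<forall>i\<in>I. a i \<in> S_set n" "int n dvd (\<Sum>i\<in>I. int (a i) * int (xs ! i))"
    using admissible_zero_sum by blast
  then have "[(\<Sum>i\<in>I. a i * xs ! i) = 0] (mod n)"
    by (simp add: cong_0_iff flip: of_nat_mult of_nat_sum)
  then show ?thesis
    unfolding has_A_zero_sum_subseq_def using I a(1) by blast
qed

end

lemma S_set_coprime: "\<forall>a\<in>S_set n. coprime a n"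
  unfolding S_set_def by blast

theorem theorem4p4:
  fixes n :: nat
  assumes "n > 0" and "odd n"
    and "\<exists>p'. prime p' \<and> multiplicity p' n = 2 \<and>
           (\<forall>q\<in>prime_factors n. q \<noteq> p' \<longrightarrow> multiplicity q n = 1)"
    and "\<forall>q\<in>prime_factors n. q \<ge> 7"
    and "small_omega n \<noteq> 2"
  shows "D_A (S_set n) n = big_omega n + 1"
proof -
  obtain p where "prime p" "multiplicity p n = 2" "\<forall>q\<in>prime_factors n. q \<noteq> p \<longrightarrow> multiplicity q n = 1"
    using assms(3) by blast
  then interpret prime_square_times_squarefree n p
    using assms(1,4) by unfold_locales auto
  have "card Q \<noteq> 1"
    using assms(5) small_omega_eq by simp
  have "D_A (S_set n) n = card Q + 3"
    unfolding D_A_def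
  proof (rule Least_equality)
    show "\<forall>xs. length xs = card Q + 3 \<and> set xs \<subseteq> {..<n} \<longrightarrow> has_A_zero_sum_subseq n (S_set n) xs"
      using zero_sum_subseq_exists[OF \<open>card Q \<noteq> 1\<close>] by blast
  next
    fix k
    assume "\<forall>xs. length xs = k \<and> set xs \<subseteq> {..<n} \<longrightarrow> has_A_zero_sum_subseq n (S_set n) xs"
    then have "big_omega n < k"
      by (rule big_omega_less_if_zero_sums[OF assms(1) S_set_coprime])
    then show "card Q + 3 \<le> k"
      using big_omega_eq by simp
  qed
  then show ?thesis
    using big_omega_eq by simp
qed

end
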